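(* Let $s\in\mathbb{T}$ and let $C_s$ denote the surface $C_{\underline t}$ for any $\underline t\in\theta^{-1}(s)$. A point $\chi\in C_s$ is a singular point of $C_s$ if and only if there exist $w\in W$ and $\underline t'\in\theta^{-1}(w(s))$ such that the character of $Z(H(\underline t';1))$ corresponding to $\chi$ extends to a one-dimensional representation of $H(\underline t';1)$.
   Context: $H(k_0,k_1,u_0,u_1;1)$ is the $\mathbb{C}$-algebra generated by $V_0,V_1,V_0^\vee,V_1^\vee$ with relations $(V_0-k_0)(V_0+k_0^{-1})=0$, $(V_1-k_1)(V_1+k_1^{-1})=0$, $(V_0^\vee-u_0)(V_0^\vee+u_0^{-1})=0$, $(V_1^\vee-u_1)(V_1^\vee+u_1^{-1})=0$, $V_1^\vee V_1V_0V_0^\vee=1$. Its center is $\mathbb{C}[X_1,X_2,X_3]/(R_{\underline t})$ with $X_1=V_1^\vee V_1+V_0V_0^\vee$, $X_2=V_1V_0+V_0^\vee V_1^\vee$, $X_3=V_1V_0^\vee+(V_0^\vee)^{-1}V_1^{-1}$, and $R_{\underline t}=X_1X_2X_3-X_1^2-X_2^2-X_3^2+p_1X_1+p_2X_2+p_3X_3+p_0+4$ with $\bar k_i=k_i-k_i^{-1}$, $\bar u_i=u_i-u_i^{-1}$, $p_1=\bar u_0\bar k_0+\bar k_1\bar u_1$, $p_2=\bar u_1\bar u_0+\bar k_0\bar k_1$, $p_3=\bar k_0\bar u_1+\bar k_1\bar u_0$, $p_0=\bar k_0^2+\bar k_1^2+\bar u_0^2+\bar u_1^2-\bar k_0\bar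 k_1\bar u_0\bar u_1$; $C_{\underline t}=\{R_{\underline t}=0\}\subset\mathbb{C}^3$, and a point $\chi=(\chi_1,\chi_2,\chi_3)\in C_{\underline t}$ is identified with the character $X_i\mapsto\chi_i$ of the center. Let $\mathbb{T}=\mathrm{Spec}\,\mathbb{C}[P]$, $P$ the weight lattice of $D_4$, with coordinates $s_1,\dots,s_4,\delta$ satisfying $s_1s_2s_3s_4=\delta^2$, acted on by the Weyl group $W=W(D_4)$. Writing $\underline t=(t_1,t_2,t_3,t_4)=(k_0,k_1,u_0,u_1)$, define $\theta:(\mathbb{C}^* )^4\to\mathbb{T}$ by $s_1=t_1t_2$, $s_2=-t_1/t_2$, $s_3=-t_3/t_4$, $s_4=t_3t_4$, $\delta=t_1t_3$. The coefficient vector $(p_0,p_1,p_2,p_3)$ of $R_{\underline t}$ depends only on the $W$-orbit of $\theta(\underline t)$, so $C_s$ is well defined and equals $C_{\underline t'}$ for all $\underline t'\in\theta^{-1}(w(s))$, $w\in W$. *)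

theory Defs
  imports "HOL-Analysis.Analysis"
begin

type_synonym params = "complex \<times> complex \<times> complex \<times> complex"   (* (k0,k1,u0,u1) = (t1,t2,t3,t4) *)
type_synonym tpt = "complex \<times> complex \<times> complex \<times> complex \<times> complex" (* (s1,s2,s3,s4,delta) *)

definition bar :: "complex \<Rightarrow> complex" where "bar k = k - inverse k"

definition nonzero_params :: "params \<Rightarrow> bool" where
  "nonzero_params t = (case t of (k0,k1,u0,u1) \<Rightarrow> k0 \<noteq> 0 \<and> k1 \<noteq> 0 \<and> u0 \<noteq> 0 \<and> u1 \<noteq> 0)"

definition Rpoly :: "params \<Rightarrow> complex \<Rightarrow> complex \<Rightarrow> complex \<Rightarrow> complex" where
  "Rpoly t x1 x2 x3 = (case t of (k0,k1,u0,u1) \<Rightarrow>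
     let p1 = bar u0 * bar k0 + bar k1 * bar u1;
         p2 = bar u1 * bar u0 + bar k0 * bar k1;
         p3 = bar k0 * bar u1 + bar k1 * bar u0;
         p0 = (bar k0)^2 + (bar k1)^2 + (bar u0)^2 + (bar u1)^2 - bar k0 * bar k1 * bar u0 * bar u1
     in x1*x2*x3 - x1^2 - x2^2 - x3^2 + p1*x1 + p2*x2 + p3*x3 + p0 + 4)"

definition singular_point :: "params \<Rightarrow> complex \<times> complex \<times> complex \<Rightarrow> bool" where
  "singular_point t chi = (case chi of (c1,c2,c3) \<Rightarrow>
     Rpoly t c1 c2 c3 = 0 \<and>
     deriv (\<lambda>x. Rpoly t x c2 c3) c1 = 0 \<and>
     deriv (\<lambda>x. Rpoly t c1 x c3) c2 = 0 \<and>
     deriv (\<lambda>x. Rpoly t c1 c2 x) c3 = 0)"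

text \<open>A one-dimensional representation of H(k0,k1,u0,u1;1) is an algebra map to the complex
  numbers, i.e. scalars (images of V0,V1,V0^vee,V1^vee) satisfying the defining relations.
  It extends the central character chi iff X1,X2,X3 are sent to chi1,chi2,chi3.\<close>
definition one_dim_rep_extending :: "params \<Rightarrow> complex \<times> complex \<times> complex \<Rightarrow> bool" where
  "one_dim_rep_extending t chi = (case t of (k0,k1,u0,u1) \<Rightarrow> case chi of (c1,c2,c3) \<Rightarrow>
     (\<exists>v0 v1 w0 w1 :: complex.
        (v0 - k0) * (v0 + inverse k0) = 0 \<and>
        (v1 - k1) * (v1 + inverse k1) = 0 \<and>
        (w0 - u0) * (w0 + inverse u0) = 0 \<and>
        (w1 - u1) * (w1 + inverse u1) = 0 \<and>
        w1 * v1 * v0 * w0 = 1 \<and>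
        c1 = w1 * v1 + v0 * w0 \<and>
        c2 = v1 * v0 + w0 * w1 \<and>
        c3 = v1 * w0 + inverse w0 * inverse v1))"

definition theta :: "params \<Rightarrow> tpt" where
  "theta t = (case t of (t1,t2,t3,t4) \<Rightarrow> (t1*t2, - t1/t2, - t3/t4, t3*t4, t1*t3))"

definition scomp :: "tpt \<Rightarrow> nat \<Rightarrow> complex" where
  "scomp s i = (case s of (s1,s2,s3,s4,d) \<Rightarrow>
     (if i = 0 then s1 else if i = 1 then s2 else if i = 2 then s3 else s4))"

text \<open>W(D4): signed permutations of the four coordinates with an even number of sign changes.\<close>
definition weylD4 :: "((nat \<Rightarrow> nat) \<times> nat set) set" where
  "weylD4 = {(\<sigma>, S). bij_betw \<sigma> {0..<4} {0..<4} \<and> S \<subseteq> {0..<4} \<and> even (card S)}"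

text \<open>Action of W(D4) on T = Spec C[P]: s_i = e^{eps_i}, delta = e^{(eps1+..+eps4)/2}.\<close>
definition weyl_act :: "(nat \<Rightarrow> nat) \<times> nat set \<Rightarrow> tpt \<Rightarrow> tpt" where
  "weyl_act w s = (case w of (\<sigma>, S) \<Rightarrow>
     let c = (\<lambda>i. if i \<in> S then inverse (scomp s (\<sigma> i)) else scomp s (\<sigma> i))
     in (c 0, c 1, c 2, c 3, snd (snd (snd (snd s))) * (\<Prod>i\<in>S. inverse (scomp s (\<sigma> i)))))"

end

theory Submission
  imports Defs
begin

(* Write A, B, C, D for bar k0, bar k1, bar u0, bar u1; these determine R_t.  A one-dimensional
   representation sends V0, V1, V0^vee, V1^vee to roots v0, v1, w0, w1 of the Hecke relations with
   w1 v1 v0 w0 = 1, and bar takes the same value at both roots of a Hecke relation, so its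
   character is a singular point of C_t by a polynomial identity.  The coefficients of R_t are
   W-invariant functions of theta t, so this also covers parameters in theta^-1 (W theta t).

   Conversely, eliminating Y and Z from the equations of a singular point (X, Y, Z) shows that X
   is a double root of (X^2 - AC X - A^2 - C^2 - 4) (X^2 - BD X - B^2 - D^2 - 4), and the roots of
   these factors are the numbers v w + (v w)^-1 for Hecke roots v, w of k0, u0 (resp. k1, u1).  A
   common root of the two factors gives a one-dimensional representation of H(t) itself, while a
   double root of one factor forces k^2 = -1 for a parameter k and yields an explicit point, the
   character of a one-dimensional representation for a W-conjugate parameter.  When X^2 <> 4 the
   coordinates Y and Z of a singular point are determined by X; by symmetry the same applies to Y
   and Z, and the points with X, Y, Z in {2, -2} are found by solving for A, B, C, D directly. *)

section \<open>Hecke roots and one-dimensional representations\<close>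

lemma bar_minus: "bar (- a) = - bar a"
  by (simp add: bar_def)

lemma bar_eq_double:
  assumes "a\<^sup>2 = -1"
  shows "bar a = 2 * a"
proof -
  have "a * - a = 1"
    using assms by (simp add: power2_eq_square)
  then have "inverse a = - a"
    by (rule inverse_unique)
  then show ?thesis
    by (simp add: bar_def)
qed

lemma sq_eq_minus_one_of_bar: "a \<noteq> 0 \<Longrightarrow> (bar a)\<^sup>2 = -4 \<Longrightarrow> a\<^sup>2 = -1"
proof -
  assume "a \<noteq> 0" "(bar a)\<^sup>2 = -4"
  then have "(a\<^sup>2 + 1)\<^sup>2 = 0"
    unfolding bar_def by (simp add: field_simps) algebra
  then show "a\<^sup>2 = -1"
    by (simp add: eq_neg_iff_add_eq_0)
qed

definition hecke_root :: "complex \<Rightarrow> complex \<Rightarrow> bool" where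
  "hecke_root k v \<longleftrightarrow> v = k \<or> v = - inverse k"

lemma hecke_relation_iff: "(v - k) * (v + inverse k) = 0 \<longleftrightarrow> hecke_root k v"
  by (simp add: hecke_root_def eq_neg_iff_add_eq_0)

lemma bar_hecke_root: "hecke_root k v \<Longrightarrow> bar v = bar k"
  by (auto simp: hecke_root_def bar_def)

lemma hecke_root_inverse: "hecke_root k v \<Longrightarrow> hecke_root k (- inverse v)"
  by (auto simp: hecke_root_def)

lemma hecke_root_minus: "hecke_root (- k) v \<longleftrightarrow> hecke_root k (- v)"
  unfolding hecke_root_def by (metis inverse_minus_eq minus_minus)

lemma hecke_root_nonzero: "k \<noteq> 0 \<Longrightarrow> hecke_root k v \<Longrightarrow> v \<noteq> 0"
  by (auto simp: hecke_root_def)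

lemma hecke_root_one: "k \<noteq> 0 \<Longrightarrow> bar k = 0 \<Longrightarrow> hecke_root k 1"
proof -
  assume "k \<noteq> 0" "bar k = 0"
  then have "(k - 1) * (k + 1) = 0"
    unfolding bar_def by (simp add: field_simps)
  then have "k = 1 \<or> k = -1"
    by (simp add: eq_neg_iff_add_eq_0)
  then show ?thesis
    by (auto simp: hecke_root_def)
qed

definition rep_point ::
  "complex \<Rightarrow> complex \<Rightarrow> complex \<Rightarrow> complex \<Rightarrow> complex \<Rightarrow> complex \<Rightarrow> complex \<Rightarrow> bool"
where
  "rep_point a b c d X Y Z \<longleftrightarrow> (\<exists>v0 v1 w0 w1.
     hecke_root a v0 \<and> hecke_root b v1 \<and> hecke_root c w0 \<and> hecke_root d w1 \<and> w1 * v1 * v0 * w0 = 1 \<and>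
     X = w1 * v1 + v0 * w0 \<and> Y = v1 * v0 + w0 * w1 \<and> Z = v1 * w0 + v0 * w1)"

lemma rep_pointI:
  "hecke_root a v0 \<Longrightarrow> hecke_root b v1 \<Longrightarrow> hecke_root c w0 \<Longrightarrow> hecke_root d w1 \<Longrightarrow>
   w1 * v1 * v0 * w0 = 1 \<Longrightarrow> X = w1 * v1 + v0 * w0 \<Longrightarrow> Y = v1 * v0 + w0 * w1 \<Longrightarrow> Z = v1 * w0 + v0 * w1 \<Longrightarrow>
   rep_point a b c d X Y Z"
  unfolding rep_point_def by blast

lemma one_dim_rep_extending_iff_rep_point:
  "one_dim_rep_extending (a, b, c, d) (X, Y, Z) \<longleftrightarrow> rep_point a b c d X Y Z"
proof -
  have "inverse w0 * inverse v1 = v0 * w1" if "w1 * v1 * v0 * w0 = 1" for v0 v1 w0 w1 :: complex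
  proof -
    have "v1 \<noteq> 0" "w0 \<noteq> 0"
      using that by auto
    then show ?thesis
      using that by (simp add: field_simps)
  qed
  then show ?thesis
    unfolding one_dim_rep_extending_def rep_point_def hecke_relation_iff prod.case
    by (intro ex_cong1 conj_cong refl) auto
qed

section \<open>Singular points of the surface\<close>

definition bar_singular ::
  "complex \<Rightarrow> complex \<Rightarrow> complex \<Rightarrow> complex \<Rightarrow> complex \<Rightarrow> complex \<Rightarrow> complex \<Rightarrow> bool"
where
  "bar_singular A B C D X Y Z \<longleftrightarrow>
     Y * Z - 2 * X + (C * A + B * D) = 0 \<and>
     X * Z - 2 * Y + (D * C + A * B) = 0 \<and>
     X * Y - 2 * Z + (A * D + B * C) = 0 \<and>
     X * Y * Z - X\<^sup>2 - Y\<^sup>2 - Z\<^sup>2 + (C * A + B * D) * X + (D * C + A * B) * Y + (A * D + B * C) * Z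
       + (A\<^sup>2 + B\<^sup>2 + C\<^sup>2 + D\<^sup>2 - A * B * C * D) + 4 = 0"

lemma singular_point_iff_bar_singular:
  "singular_point (k0, k1, u0, u1) (X, Y, Z) \<longleftrightarrow>
    bar_singular (bar k0) (bar k1) (bar u0) (bar u1) X Y Z"
proof -
  let ?R = "Rpoly (k0, k1, u0, u1)"
  have derivs:
    "((\<lambda>x. ?R x Y Z) has_field_derivative Y * Z - 2 * X + (bar u0 * bar k0 + bar k1 * bar u1)) (at X)"
    "((\<lambda>y. ?R X y Z) has_field_derivative X * Z - 2 * Y + (bar u1 * bar u0 + bar k0 * bar k1)) (at Y)"
    "((\<lambda>z. ?R X Y z) has_field_derivative X * Y - 2 * Z + (bar k0 * bar u1 + bar k1 * bar u0)) (at Z)"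
    unfolding Rpoly_def Let_def prod.case by (rule derivative_eq_intros refl | simp)+
  then show ?thesis
    unfolding singular_point_def bar_singular_def prod.case
      DERIV_imp_deriv[OF derivs(1)] DERIV_imp_deriv[OF derivs(2)] DERIV_imp_deriv[OF derivs(3)]
    by (simp add: Rpoly_def Let_def ac_simps)
qed

lemma bar_singular_one_dim:
  fixes v0 v1 w0 w1 :: complex
  assumes "w1 * v1 * v0 * w0 = 1"
  shows "bar_singular (bar v0) (bar v1) (bar w0) (bar w1)
    (w1 * v1 + v0 * w0) (v1 * v0 + w0 * w1) (v1 * w0 + v0 * w1)"
proof -
  have "inverse v0 = v1 * w0 * w1" "inverse v1 = v0 * w0 * w1"
    "inverse w0 = v0 * v1 * w1" "inverse w1 = v0 * v1 * w0"
    using assms by (auto intro!: inverse_unique simp: ac_simps)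
  then show ?thesis
    unfolding bar_singular_def bar_def using assms by (simp only:) algebra
qed

lemma rep_point_bar_singular:
  assumes "rep_point a b c d X Y Z"
  shows "bar_singular (bar a) (bar b) (bar c) (bar d) X Y Z"
  using assms bar_singular_one_dim bar_hecke_root unfolding rep_point_def by metis

(* If k^2 = -1 for a parameter k, the two Hecke roots of k coincide.  The corresponding disjunct
   is then the character of a one-dimensional representation for a W-conjugate parameter, but in
   general not for t itself. *)
definition special_point ::
  "complex \<Rightarrow> complex \<Rightarrow> complex \<Rightarrow> complex \<Rightarrow> complex \<Rightarrow> complex \<Rightarrow> complex \<Rightarrow> bool"
where
  "special_point a b c d X Y Z \<longleftrightarrow>
     a\<^sup>2 = -1 \<and> X = a * bar c \<and> Y = a * bar b \<and> Z = a * bar d \<or>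
     b\<^sup>2 = -1 \<and> X = b * bar d \<and> Y = b * bar a \<and> Z = b * bar c \<or>
     c\<^sup>2 = -1 \<and> X = c * bar a \<and> Y = c * bar d \<and> Z = c * bar b \<or>
     d\<^sup>2 = -1 \<and> X = d * bar b \<and> Y = d * bar c \<and> Z = d * bar a"

lemma special_point_bar_singular:
  assumes "special_point a b c d X Y Z"
  shows "bar_singular (bar a) (bar b) (bar c) (bar d) X Y Z"
  using assms unfolding special_point_def
  by (elim disjE conjE; simp add: bar_eq_double bar_singular_def; algebra)

definition rep_or_special ::
  "complex \<Rightarrow> complex \<Rightarrow> complex \<Rightarrow> complex \<Rightarrow> complex \<Rightarrow> complex \<Rightarrow> complex \<Rightarrow> bool"
where
  "rep_or_special a b c d X Y Z \<longleftrightarrow> rep_point a b c d X Y Z \<or> special_point a b c d X Y Z"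

lemma rep_or_special_bar_singular:
  "rep_or_special a b c d X Y Z \<Longrightarrow> bar_singular (bar a) (bar b) (bar c) (bar d) X Y Z"
  unfolding rep_or_special_def using rep_point_bar_singular special_point_bar_singular by blast

(* Permuting the parameters permutes the coordinates, and negating two parameters negates two
   coordinates; these symmetries reduce the classification to the first coordinate and to the
   points with X = Y = Z. *)
lemma bar_singular_swap_bc: "bar_singular A B C D X Y Z \<Longrightarrow> bar_singular A C B D Y X Z"
  unfolding bar_singular_def by (simp add: algebra_simps)

lemma bar_singular_swap_cd: "bar_singular A B C D X Y Z \<Longrightarrow> bar_singular A B D C Z Y X"
  unfolding bar_singular_def by (simp add: algebra_simps)

lemma bar_singular_minus_ac:
  "bar_singular A B C D X Y Z \<Longrightarrow> bar_singular (- A) B (- C) D X (- Y) (- Z)"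
  unfolding bar_singular_def by (elim conjE, intro conjI; algebra)

lemma bar_singular_minus_ab:
  "bar_singular A B C D X Y Z \<Longrightarrow> bar_singular (- A) (- B) C D (- X) Y (- Z)"
  unfolding bar_singular_def by (elim conjE, intro conjI; algebra)

lemma rep_point_swap_bc:
  assumes "rep_point a c b d Y X Z"
  shows "rep_point a b c d X Y Z"
  using assms[unfolded rep_point_def]
  by (elim exE conjE) (rule rep_pointI, assumption+, algebra+)

lemma rep_point_swap_cd:
  assumes "rep_point a b d c Z Y X"
  shows "rep_point a b c d X Y Z"
  using assms[unfolded rep_point_def]
  by (elim exE conjE) (rule rep_pointI, assumption+, algebra+)

lemma rep_point_minus_ac:
  assumes "rep_point (- a) b (- c) d X (- Y) (- Z)"
  shows "rep_point a b c d X Y Z"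
  using assms[unfolded rep_point_def hecke_root_minus]
  by (elim exE conjE) (rule rep_pointI, assumption+, algebra+)

lemma rep_point_minus_ab:
  assumes "rep_point (- a) (- b) c d (- X) Y (- Z)"
  shows "rep_point a b c d X Y Z"
  using assms[unfolded rep_point_def hecke_root_minus]
  by (elim exE conjE) (rule rep_pointI, assumption+, algebra+)

lemma rep_or_special_swap_bc: "rep_or_special a c b d Y X Z \<Longrightarrow> rep_or_special a b c d X Y Z"
  using rep_point_swap_bc unfolding rep_or_special_def special_point_def by blast

lemma rep_or_special_swap_cd: "rep_or_special a b d c Z Y X \<Longrightarrow> rep_or_special a b c d X Y Z"
  using rep_point_swap_cd unfolding rep_or_special_def special_point_def by blast

lemma rep_or_special_minus_ac:
  "rep_or_special (- a) b (- c) d X (- Y) (- Z) \<Longrightarrow> rep_or_special a b c d X Y Z"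
  using rep_point_minus_ac unfolding rep_or_special_def special_point_def bar_minus by auto

lemma rep_or_special_minus_ab:
  "rep_or_special (- a) (- b) c d (- X) Y (- Z) \<Longrightarrow> rep_or_special a b c d X Y Z"
  using rep_point_minus_ab unfolding rep_or_special_def special_point_def bar_minus by auto

section \<open>Classification of singular points\<close>

definition pair_poly :: "complex \<Rightarrow> complex \<Rightarrow> complex \<Rightarrow> complex" where
  "pair_poly A C X = X\<^sup>2 - A * C * X - A\<^sup>2 - C\<^sup>2 - 4"

(* 2 X - A C is the X-derivative of pair_poly A C X: X is a double root of the product. *)
lemma bar_singular_pair_poly:
  assumes "bar_singular A B C D X Y Z"
  shows "pair_poly A C X * pair_poly B D X = 0"
    and "(2 * X - A * C) * pair_poly B D X + pair_poly A C X * (2 * X - B * D) = 0"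
  using assms unfolding bar_singular_def pair_poly_def by algebra+

lemma pair_poly_bar:
  assumes "a \<noteq> 0" "c \<noteq> 0"
  shows "pair_poly (bar a) (bar c) X =
    (X - (a * c + inverse (a * c))) * (X - (a * - inverse c + inverse (a * - inverse c)))"
  using assms unfolding pair_poly_def bar_def by (simp add: field_simps) algebra

lemma pair_poly_bar_root:
  assumes "a \<noteq> 0" "c \<noteq> 0" "pair_poly (bar a) (bar c) X = 0"
  obtains v w where "hecke_root a v" "hecke_root c w" "X = v * w + inverse (v * w)"
proof -
  have "X = a * c + inverse (a * c) \<or> X = a * - inverse c + inverse (a * - inverse c)"
    using assms by (simp add: pair_poly_bar)
  then show ?thesis
    using that[of a c] that[of a "- inverse c"] by (auto simp: hecke_root_def)
qed

lemma pair_poly_double_root: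
  assumes "a \<noteq> 0" "c \<noteq> 0" "pair_poly (bar a) (bar c) X = 0" "2 * X - bar a * bar c = 0"
  shows "a\<^sup>2 = -1 \<and> X = a * bar c \<or> c\<^sup>2 = -1 \<and> X = c * bar a"
proof -
  have "((bar a)\<^sup>2 + 4) * ((bar c)\<^sup>2 + 4) = 0"
    using assms(3,4) unfolding pair_poly_def by algebra
  then have "(bar a)\<^sup>2 = -4 \<or> (bar c)\<^sup>2 = -4"
    by (simp add: eq_neg_iff_add_eq_0)
  then have "a\<^sup>2 = -1 \<or> c\<^sup>2 = -1"
    using assms(1,2) sq_eq_minus_one_of_bar by blast
  with assms(4) show ?thesis
    by (auto simp: bar_eq_double ac_simps)
qed

lemma plus_inverse_eq_cases:
  fixes x y :: complex
  assumes "x \<noteq> 0" "y \<noteq> 0" "x + inverse x = y + inverse y"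
  shows "y = x \<or> y = inverse x"
proof -
  have "(y - x) * (x * y - 1) = 0"
    using assms by (simp add: field_simps)
  then have "y = x \<or> x * y = 1"
    by simp
  then show ?thesis
    using assms(1) by (auto simp: field_simps)
qed

lemma rep_point_of_equal_traces:
  assumes nonzero: "a \<noteq> 0" "b \<noteq> 0" "c \<noteq> 0" "d \<noteq> 0"
    and roots: "hecke_root a v0" "hecke_root b v1" "hecke_root c w0" "hecke_root d w1"
    and "X = v0 * w0 + inverse (v0 * w0)" "X = v1 * w1 + inverse (v1 * w1)"
  shows "\<exists>Y Z. rep_point a b c d X Y Z"
proof -
  have roots_nonzero: "v0 \<noteq> 0" "v1 \<noteq> 0" "w0 \<noteq> 0" "w1 \<noteq> 0"
    using nonzero roots hecke_root_nonzero by blast+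
  then have "v1 * w1 = v0 * w0 \<or> v1 * w1 = inverse (v0 * w0)"
    using plus_inverse_eq_cases[of "v0 * w0" "v1 * w1"] assms(9,10) by auto
  then show ?thesis
  proof
    assume equal: "v1 * w1 = v0 * w0"
    have "- inverse w1 * - inverse v1 * v0 * w0 = 1"
      using equal roots_nonzero by (simp add: field_simps mult_ac)
    moreover have "X = - inverse w1 * - inverse v1 + v0 * w0"
      using assms(9) equal by (simp add: mult_ac flip: inverse_mult_distrib)
    ultimately have "rep_point a b c d X (- inverse v1 * v0 + w0 * - inverse w1)
        (- inverse v1 * w0 + v0 * - inverse w1)"
      by (rule rep_pointI[OF roots(1) hecke_root_inverse[OF roots(2)] roots(3)
            hecke_root_inverse[OF roots(4)]]) simp_all
    then show ?thesis
      by blast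
  next
    assume inverse: "v1 * w1 = inverse (v0 * w0)"
    have "w1 * v1 * v0 * w0 = 1"
      using inverse roots_nonzero by (simp add: field_simps)
    moreover have "X = w1 * v1 + v0 * w0"
      using assms(9) inverse by (simp add: mult_ac)
    ultimately have "rep_point a b c d X (v1 * v0 + w0 * w1) (v1 * w0 + v0 * w1)"
      by (rule rep_pointI[OF roots]) simp_all
    then show ?thesis
      by blast
  qed
qed

lemma exists_rep_or_special_same_first:
  assumes nonzero: "a \<noteq> 0" "b \<noteq> 0" "c \<noteq> 0" "d \<noteq> 0"
    and sing: "bar_singular (bar a) (bar b) (bar c) (bar d) X Y Z"
  shows "\<exists>Y' Z'. rep_or_special a b c d X Y' Z'"
proof -
  let ?f = "pair_poly (bar a) (bar c) X" and ?g = "pair_poly (bar b) (bar d) X"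
  have "?f * ?g = 0" "(2 * X - bar a * bar c) * ?g + ?f * (2 * X - bar b * bar d) = 0"
    using bar_singular_pair_poly[OF sing] .
  then consider "?f = 0" "2 * X - bar a * bar c = 0" | "?g = 0" "2 * X - bar b * bar d = 0"
    | "?f = 0" "?g = 0"
    by auto
  then show ?thesis
  proof cases
    case 1
    then have "a\<^sup>2 = -1 \<and> X = a * bar c \<or> c\<^sup>2 = -1 \<and> X = c * bar a"
      using pair_poly_double_root nonzero by blast
    then show ?thesis
      unfolding rep_or_special_def special_point_def by blast
  next
    case 2
    then have "b\<^sup>2 = -1 \<and> X = b * bar d \<or> d\<^sup>2 = -1 \<and> X = d * bar b"
      using pair_poly_double_root nonzero by blast
    then show ?thesis
      unfolding rep_or_special_def special_point_def by blast
  next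
    case 3
    obtain v0 w0 where "hecke_root a v0" "hecke_root c w0" "X = v0 * w0 + inverse (v0 * w0)"
      using pair_poly_bar_root[OF nonzero(1,3) 3(1)] .
    moreover obtain v1 w1
      where "hecke_root b v1" "hecke_root d w1" "X = v1 * w1 + inverse (v1 * w1)"
      using pair_poly_bar_root[OF nonzero(2,4) 3(2)] .
    ultimately show ?thesis
      using rep_point_of_equal_traces[OF nonzero] unfolding rep_or_special_def by metis
  qed
qed

lemma bar_singular_unique:
  assumes "bar_singular A B C D X Y Z" "bar_singular A B C D X Y' Z'" "X\<^sup>2 \<noteq> 4"
  shows "Y' = Y \<and> Z' = Z"
proof -
  have "(X\<^sup>2 - 4) * Y = - ((A * D + B * C) * X + 2 * (D * C + A * B))"
    "(X\<^sup>2 - 4) * Y' = - ((A * D + B * C) * X + 2 * (D * C + A * B))"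
    using assms(1,2) unfolding bar_singular_def by algebra+
  then have "(X\<^sup>2 - 4) * Y' = (X\<^sup>2 - 4) * Y"
    by simp
  then have "Y' = Y"
    using assms(3) by simp
  moreover have "2 * Z = X * Y + (A * D + B * C)" "2 * Z' = X * Y' + (A * D + B * C)"
    using assms(1,2) unfolding bar_singular_def by algebra+
  ultimately show ?thesis
    by (metis mult_cancel_left zero_neq_numeral)
qed

lemma rep_or_special_of_sq_ne_four:
  assumes nonzero: "a \<noteq> 0" "b \<noteq> 0" "c \<noteq> 0" "d \<noteq> 0"
    and sing: "bar_singular (bar a) (bar b) (bar c) (bar d) X Y Z" and "X\<^sup>2 \<noteq> 4"
  shows "rep_or_special a b c d X Y Z"
proof -
  obtain Y' Z' where point: "rep_or_special a b c d X Y' Z'"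
    using exists_rep_or_special_same_first[OF nonzero sing] by blast
  have "Y' = Y \<and> Z' = Z"
    using bar_singular_unique[OF sing rep_or_special_bar_singular[OF point] \<open>X\<^sup>2 \<noteq> 4\<close>] .
  with point show ?thesis
    by simp
qed

lemma bar_singular_at_two:
  fixes A B C D :: complex
  assumes "bar_singular A B C D 2 2 2"
  shows "A = 0 \<and> B = 0 \<and> C = 0 \<and> D = 0 \<or>
    A\<^sup>2 = -4 \<and> B = -A \<and> C = -A \<and> D = -A \<or> B\<^sup>2 = -4 \<and> A = -B \<and> C = -B \<and> D = -B \<or>
    C\<^sup>2 = -4 \<and> A = -C \<and> B = -C \<and> D = -C \<or> D\<^sup>2 = -4 \<and> A = -D \<and> B = -D \<and> C = -D"
proof -
  have e1: "C * A + B * D = 0" and e2: "D * C + A * B = 0" and e3: "A * D + B * C = 0"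
    and e0: "A\<^sup>2 + B\<^sup>2 + C\<^sup>2 + D\<^sup>2 - A * B * C * D = 0"
    using assms unfolding bar_singular_def by algebra+
  have "(A + D) * (B + C) = 0" "(A - D) * (B - C) = 0"
    using e1 e2 by algebra+
  then consider "D = A" "D = -A" | "D = -A" "C = B" | "C = -B" "D = A" | "C = B" "C = -B"
    by (auto simp: eq_neg_iff_add_eq_0 add.commute)
  then show ?thesis
  proof cases
    case 1
    then have "A = 0" "D = 0"
      by simp_all
    with e3 e0 have "B = 0 \<and> C = 0"
      by (auto simp: power2_eq_square)
    with \<open>A = 0\<close> \<open>D = 0\<close> show ?thesis
      by simp
  next
    case 4
    then have "B = 0" "C = 0"
      by simp_all
    with e3 e0 have "A = 0 \<and> D = 0"
      by (auto simp: power2_eq_square)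
    with \<open>B = 0\<close> \<open>C = 0\<close> show ?thesis
      by simp
  next
    case 2
    have "(A + B) * (B - A) = 0"
      using e1 e3 2 by algebra
    then have B: "B = -A \<or> B = A"
      by (auto simp: eq_neg_iff_add_eq_0 add.commute)
    then have "A\<^sup>2 * (A\<^sup>2 + 4) = 0"
      using e0 2 by (elim disjE) algebra+
    then have "A = 0 \<or> A\<^sup>2 = -4"
      by (simp add: eq_neg_iff_add_eq_0)
    with B 2 show ?thesis
      by auto
  next
    case 3
    have "(A + B) * (A - B) = 0"
      using e1 e3 3 by algebra
    then have B: "B = -A \<or> B = A"
      by (auto simp: eq_neg_iff_add_eq_0 add.commute)
    then have "A\<^sup>2 * (A\<^sup>2 + 4) = 0"
      using e0 3 by (elim disjE) algebra+
    then have "A = 0 \<or> A\<^sup>2 = -4"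
      by (simp add: eq_neg_iff_add_eq_0)
    with B 3 show ?thesis
      by auto
  qed
qed

lemma bar_singular_at_minus_two:
  fixes A B C D :: complex
  assumes "bar_singular A B C D (-2) (-2) (-2)"
  shows "B = A \<and> C = A \<and> D = A \<and> A\<^sup>2 = -4"
proof -
  have e1: "C * A + B * D = -8" and e2: "D * C + A * B = -8" and e3: "A * D + B * C = -8"
    and e0: "A\<^sup>2 + B\<^sup>2 + C\<^sup>2 + D\<^sup>2 - A * B * C * D = -32"
    using assms unfolding bar_singular_def by algebra+
  have two_equal: "Q = P \<and> P\<^sup>2 = -4"
    if "P * Q + P\<^sup>2 = -8" "3 * P\<^sup>2 + Q\<^sup>2 - P ^ 3 * Q = -32" for P Q :: complex
  proof -
    have "(P\<^sup>2 + 4) ^ 3 = 0"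
      using that by algebra
    then have "P\<^sup>2 = -4"
      by (simp add: eq_neg_iff_add_eq_0)
    moreover from this have "P * Q = P * P"
      using that(1) by algebra
    ultimately show ?thesis
      by auto
  qed
  have "(A - D) * (C - B) = 0" "(A - B) * (C - D) = 0"
    using e1 e2 e3 by algebra+
  then consider "D = A" "B = A" | "D = A" "D = C" | "C = B" "B = A" | "C = B" "D = C"
    by auto
  then show ?thesis
  proof cases
    case 1
    have "A * C + A\<^sup>2 = -8" "3 * A\<^sup>2 + C\<^sup>2 - A ^ 3 * C = -32"
      using e1 e0 1 by algebra+
    with 1 show ?thesis
      using two_equal by metis
  next
    case 2
    have "A * B + A\<^sup>2 = -8" "3 * A\<^sup>2 + B\<^sup>2 - A ^ 3 * B = -32"
      using e2 e0 2 by algebra+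
    with 2 show ?thesis
      using two_equal by metis
  next
    case 3
    have "A * D + A\<^sup>2 = -8" "3 * A\<^sup>2 + D\<^sup>2 - A ^ 3 * D = -32"
      using e3 e0 3 by algebra+
    with 3 show ?thesis
      using two_equal by metis
  next
    case 4
    have "B * A + B\<^sup>2 = -8" "3 * B\<^sup>2 + A\<^sup>2 - B ^ 3 * A = -32"
      using e1 e0 4 by algebra+
    with 4 show ?thesis
      using two_equal[of B A] by auto
  qed
qed

lemma rep_or_special_at_two:
  assumes nonzero: "a \<noteq> 0" "b \<noteq> 0" "c \<noteq> 0" "d \<noteq> 0"
    and sing: "bar_singular (bar a) (bar b) (bar c) (bar d) 2 2 2"
  shows "rep_or_special a b c d 2 2 2"
proof -
  have special: "k\<^sup>2 = -1 \<and> k * - bar k = 2" if "k \<noteq> 0" "(bar k)\<^sup>2 = -4" for k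
  proof -
    have "k\<^sup>2 = -1"
      using that sq_eq_minus_one_of_bar by blast
    then show ?thesis
      by (simp add: bar_eq_double) algebra
  qed
  from bar_singular_at_two[OF sing] show ?thesis
  proof (elim disjE conjE)
    assume "bar a = 0" "bar b = 0" "bar c = 0" "bar d = 0"
    then have "rep_point a b c d 2 2 2"
      using nonzero by (intro rep_pointI[of a 1 b 1 c 1 d 1]) (simp_all add: hecke_root_one)
    then show ?thesis
      by (simp add: rep_or_special_def)
  qed (use special nonzero in \<open>auto simp: rep_or_special_def special_point_def\<close>)
qed

lemma rep_or_special_at_minus_two:
  assumes nonzero: "a \<noteq> 0" and sing: "bar_singular (bar a) (bar b) (bar c) (bar d) (-2) (-2) (-2)"
  shows "rep_or_special a b c d (-2) (-2) (-2)"
proof -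
  have bars: "bar b = bar a" "bar c = bar a" "bar d = bar a" "(bar a)\<^sup>2 = -4"
    using bar_singular_at_minus_two[OF sing] by auto
  then have "a\<^sup>2 = -1"
    using nonzero sq_eq_minus_one_of_bar by blast
  with bars show ?thesis
    by (simp add: rep_or_special_def special_point_def bar_eq_double power2_eq_square)
qed

lemma rep_or_special_at_diagonal:
  assumes nonzero: "a \<noteq> 0" "b \<noteq> 0" "c \<noteq> 0" "d \<noteq> 0"
    and sing: "bar_singular (bar a) (bar b) (bar c) (bar d) X X X" and "X\<^sup>2 = 4"
  shows "rep_or_special a b c d X X X"
proof -
  have "X = 2 \<or> X = -2"
    using \<open>X\<^sup>2 = 4\<close> power2_eq_iff[of X 2] by simp
  then show ?thesis
    using rep_or_special_at_two[OF nonzero] rep_or_special_at_minus_two[OF nonzero(1)] sing by auto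
qed

lemma rep_or_special_of_all_sq_four:
  assumes nonzero: "a \<noteq> 0" "b \<noteq> 0" "c \<noteq> 0" "d \<noteq> 0"
    and sing: "bar_singular (bar a) (bar b) (bar c) (bar d) X Y Z"
    and squares: "X\<^sup>2 = 4" "Y\<^sup>2 = 4" "Z\<^sup>2 = 4"
  shows "rep_or_special a b c d X Y Z"
proof -
  have nonzero_minus: "- a \<noteq> 0" "- b \<noteq> 0" "- c \<noteq> 0"
    using nonzero by simp_all
  have "Y = X \<or> Y = - X" "Z = X \<or> Z = - X"
    using squares power2_eq_iff[of Y X] power2_eq_iff[of Z X] by simp_all
  then consider "Y = X" "Z = X" | "Y = - X" "Z = - X" | "Y = - X" "Z = X" | "Y = X" "Z = - X"
    by blast
  then show ?thesis
  proof cases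
    case 1
    then show ?thesis
      using rep_or_special_at_diagonal[OF nonzero] sing squares by simp
  next
    case 2
    have "bar_singular (bar (- a)) (bar b) (bar (- c)) (bar d) X X X"
      using bar_singular_minus_ac[OF sing] 2 by (simp add: bar_minus)
    then have "rep_or_special (- a) b (- c) d X (- Y) (- Z)"
      using rep_or_special_at_diagonal nonzero nonzero_minus squares 2 by simp
    then show ?thesis
      by (rule rep_or_special_minus_ac)
  next
    case 3
    have "bar_singular (bar (- a)) (bar (- b)) (bar c) (bar d) (- X) (- X) (- X)"
      using bar_singular_minus_ab[OF sing] 3 by (simp add: bar_minus)
    then have "rep_or_special (- a) (- b) c d (- X) Y (- Z)"
      using rep_or_special_at_diagonal nonzero nonzero_minus squares 3 by simp
    then show ?thesis
      by (rule rep_or_special_minus_ab)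
  next
    case 4
    have "bar_singular (bar a) (bar (- b)) (bar (- c)) (bar d) (- X) (- X) (- X)"
      using bar_singular_minus_ac[OF bar_singular_minus_ab[OF sing]] 4 by (simp add: bar_minus)
    then have "rep_or_special a (- b) (- c) d (- X) (- X) (- X)"
      using rep_or_special_at_diagonal nonzero nonzero_minus squares by simp
    then have "rep_or_special (- a) (- b) c d (- X) Y (- Z)"
      using rep_or_special_minus_ac[of "- a" "- b" c d "- X" Y "- Z"] 4 by simp
    then show ?thesis
      by (rule rep_or_special_minus_ab)
  qed
qed

lemma bar_singular_imp_rep_or_special:
  assumes nonzero: "a \<noteq> 0" "b \<noteq> 0" "c \<noteq> 0" "d \<noteq> 0"
    and sing: "bar_singular (bar a) (bar b) (bar c) (bar d) X Y Z"
  shows "rep_or_special a b c d X Y Z"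
proof (cases "X\<^sup>2 = 4 \<and> Y\<^sup>2 = 4 \<and> Z\<^sup>2 = 4")
  case True
  then show ?thesis
    using rep_or_special_of_all_sq_four[OF nonzero sing] by blast
next
  case False
  then consider "X\<^sup>2 \<noteq> 4" | "Y\<^sup>2 \<noteq> 4" | "Z\<^sup>2 \<noteq> 4"
    by blast
  then show ?thesis
  proof cases
    case 1
    then show ?thesis
      by (rule rep_or_special_of_sq_ne_four[OF nonzero sing])
  next
    case 2
    have "rep_or_special a c b d Y X Z"
      using rep_or_special_of_sq_ne_four[OF nonzero(1,3,2,4) bar_singular_swap_bc[OF sing] 2] .
    then show ?thesis
      by (rule rep_or_special_swap_bc)
  next
    case 3
    have "rep_or_special a b d c Z Y X"
      using rep_or_special_of_sq_ne_four[OF nonzero(1,2,4,3) bar_singular_swap_cd[OF sing] 3] .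
    then show ?thesis
      by (rule rep_or_special_swap_cd)
  qed
qed

section \<open>Dependence of the surface on the Weyl group orbit\<close>

definition delta_of :: "tpt \<Rightarrow> complex" where
  "delta_of s = snd (snd (snd (snd s)))"

definition trace_sum :: "(complex \<Rightarrow> complex) \<Rightarrow> tpt \<Rightarrow> complex" where
  "trace_sum f s = (\<Sum>i\<in>{0..<4}. f (scomp s i + inverse (scomp s i)))"

definition signed_prod :: "complex \<Rightarrow> tpt \<Rightarrow> complex" where
  "signed_prod \<epsilon> s = (\<Prod>i\<in>{0..<4}. 1 + \<epsilon> * scomp s i) / delta_of s"

(* R_s of the paper: the coefficients of R_t written as functions of s = theta t. *)
definition Rpoly_torus :: "tpt \<Rightarrow> complex \<Rightarrow> complex \<Rightarrow> complex \<Rightarrow> complex" where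
  "Rpoly_torus s x1 x2 x3 =
     x1 * x2 * x3 - x1\<^sup>2 - x2\<^sup>2 - x3\<^sup>2
     + (signed_prod 1 s + signed_prod (-1) s) / 2 * x1
     + trace_sum (\<lambda>e. e) s * x2
     + (signed_prod (-1) s - signed_prod 1 s) / 2 * x3
     - ((trace_sum (\<lambda>e. e) s)\<^sup>2 - trace_sum (\<lambda>e. e\<^sup>2) s) / 2 - 4"

lemma Rpoly_eq_Rpoly_torus:
  assumes "nonzero_params t"
  shows "Rpoly t = Rpoly_torus (theta t)"
proof -
  obtain k0 k1 u0 u1 where t: "t = (k0, k1, u0, u1)"
    by (cases t) auto
  have four: "{0..<4::nat} = {0, 1, 2, 3}"
    by auto
  show ?thesis
    using assms unfolding t
    by (intro ext) (simp add: Rpoly_def Rpoly_torus_def nonzero_params_def theta_def trace_sum_def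
        signed_prod_def delta_of_def scomp_def four bar_def field_simps, algebra)
qed

lemma scomp_weyl_act:
  assumes "i < 4"
  shows "scomp (weyl_act (\<sigma>, S) s) i = (if i \<in> S then inverse (scomp s (\<sigma> i)) else scomp s (\<sigma> i))"
proof -
  have "i = 0 \<or> i = 1 \<or> i = 2 \<or> i = 3"
    using assms by auto
  then show ?thesis
    by (cases s) (auto simp: weyl_act_def Let_def scomp_def)
qed

lemma delta_of_weyl_act:
  "delta_of (weyl_act (\<sigma>, S) s) = delta_of s * (\<Prod>i\<in>S. inverse (scomp s (\<sigma> i)))"
  by (simp add: weyl_act_def Let_def delta_of_def)

lemma trace_sum_weyl_act:
  assumes "(\<sigma>, S) \<in> weylD4"
  shows "trace_sum f (weyl_act (\<sigma>, S) s) = trace_sum f s"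
proof -
  have bij: "bij_betw \<sigma> {0..<4} {0..<4}"
    using assms by (simp add: weylD4_def)
  have "trace_sum f (weyl_act (\<sigma>, S) s) = (\<Sum>i\<in>{0..<4}. f (scomp s (\<sigma> i) + inverse (scomp s (\<sigma> i))))"
    unfolding trace_sum_def by (intro sum.cong) (auto simp: scomp_weyl_act add.commute)
  also have "\<dots> = trace_sum f s"
    unfolding trace_sum_def by (rule sum.reindex_bij_betw[OF bij])
  finally show ?thesis .
qed

(* Inverting s_i multiplies 1 + \<epsilon> s_i by \<epsilon> / s_i.  As S has even size the signs cancel,
   and the remaining factor is the one by which delta changes. *)
lemma signed_prod_weyl_act:
  assumes w: "(\<sigma>, S) \<in> weylD4" and "\<epsilon>\<^sup>2 = 1" and nonzero: "\<And>i. i < 4 \<Longrightarrow> scomp s i \<noteq> 0"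
  shows "signed_prod \<epsilon> (weyl_act (\<sigma>, S) s) = signed_prod \<epsilon> s"
proof -
  have bij: "bij_betw \<sigma> {0..<4} {0..<4}" and S: "S \<subseteq> {0..<4}" "even (card S)"
    using w by (auto simp: weylD4_def)
  define f where "f i = scomp s (\<sigma> i)" for i
  have f_nonzero: "f i \<noteq> 0" if "i \<in> {0..<4}" for i
    using nonzero bij_betwE[OF bij] that unfolding f_def by auto
  define m where "m = (\<Prod>i\<in>S. inverse (f i))"
  have "finite S"
    using S(1) finite_subset by blast
  then have "m \<noteq> 0"
    using f_nonzero S(1) unfolding m_def by auto
  have "1 + \<epsilon> * inverse x = (1 + \<epsilon> * x) * (\<epsilon> * inverse x)" if "x \<noteq> 0" for x
    using that \<open>\<epsilon>\<^sup>2 = 1\<close> by (simp add: field_simps power2_eq_square)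
  then have "(\<Prod>i\<in>{0..<4}. 1 + \<epsilon> * scomp (weyl_act (\<sigma>, S) s) i)
      = (\<Prod>i\<in>{0..<4}. (1 + \<epsilon> * f i) * (if i \<in> S then \<epsilon> * inverse (f i) else 1))"
    using f_nonzero by (intro prod.cong) (auto simp: scomp_weyl_act f_def)
  also have "\<dots> = (\<Prod>i\<in>{0..<4}. 1 + \<epsilon> * f i) * (\<Prod>i\<in>S. \<epsilon> * inverse (f i))"
    using S(1) by (simp add: prod.distrib prod.inter_restrict[symmetric] Int_absorb1)
  also have "\<dots> = (\<Prod>i\<in>{0..<4}. 1 + \<epsilon> * scomp s i) * m"
  proof -
    obtain k where "card S = 2 * k"
      using S(2) by blast
    then have "\<epsilon> ^ card S = 1"
      using \<open>\<epsilon>\<^sup>2 = 1\<close> by (simp add: power_mult)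
    then show ?thesis
      unfolding m_def f_def
      by (simp add: prod.distrib prod.reindex_bij_betw[OF bij, of "\<lambda>j. 1 + \<epsilon> * scomp s j"])
  qed
  finally show ?thesis
    using \<open>m \<noteq> 0\<close> unfolding signed_prod_def delta_of_weyl_act m_def f_def by simp
qed

lemma Rpoly_torus_weyl_act:
  assumes "w \<in> weylD4" "\<And>i. i < 4 \<Longrightarrow> scomp s i \<noteq> 0"
  shows "Rpoly_torus (weyl_act w s) = Rpoly_torus s"
  using assms trace_sum_weyl_act signed_prod_weyl_act unfolding Rpoly_torus_def
  by (cases w) (simp add: fun_eq_iff)

lemma scomp_theta_nonzero: "nonzero_params t \<Longrightarrow> i < 4 \<Longrightarrow> scomp (theta t) i \<noteq> 0"
  by (auto simp: nonzero_params_def theta_def scomp_def split: prod.splits)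

lemma Rpoly_eq_of_weyl:
  assumes "nonzero_params t" "nonzero_params t'" "w \<in> weylD4" "theta t' = weyl_act w (theta t)"
  shows "Rpoly t' = Rpoly t"
  using assms Rpoly_torus_weyl_act scomp_theta_nonzero by (simp add: Rpoly_eq_Rpoly_torus)

section \<open>One-dimensional representations in the Weyl group orbit\<close>

lemma theta_surj:
  assumes "s1 \<noteq> 0" "s2 \<noteq> 0" "s3 \<noteq> 0" "s4 \<noteq> 0" "s1 * s2 * s3 * s4 = \<delta>\<^sup>2"
  obtains t where "nonzero_params t" "theta t = (s1, s2, s3, s4, \<delta>)"
proof -
  obtain t1 where t1: "t1\<^sup>2 = - (s1 * s2)"
    using power2_csqrt by blast
  have "t1 \<noteq> 0" "\<delta> \<noteq> 0"
    using t1 assms by auto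
  then have "nonzero_params (t1, s1 / t1, \<delta> / t1, s4 * t1 / \<delta>)"
    "theta (t1, s1 / t1, \<delta> / t1, s4 * t1 / \<delta>) = (s1, s2, s3, s4, \<delta>)"
    using assms t1 by (auto simp: nonzero_params_def theta_def field_simps power2_eq_square)
  then show ?thesis
    using that by blast
qed

lemma one_dim_rep_of_theta:
  assumes "nonzero_params t" "theta t = (s1, s2, s3, s4, \<delta>)" "s1 * s4 = 1"
  shows "one_dim_rep_extending t (\<delta> + inverse \<delta>, s1 + inverse s1, - (s3 / \<delta> + \<delta> / s3))"
proof -
  obtain a b c d where t: "t = (a, b, c, d)"
    by (cases t) auto
  have nonzero: "a \<noteq> 0" "b \<noteq> 0" "c \<noteq> 0" "d \<noteq> 0"
    using assms(1) by (simp_all add: t nonzero_params_def)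
  have s: "s1 = a * b" "s3 = - c / d" "s4 = c * d" "\<delta> = a * c"
    using assms(2) by (simp_all add: t theta_def)
  have product: "d * b * a * c = 1"
    using assms(3) by (simp add: s ac_simps)
  have "rep_point a b c d (\<delta> + inverse \<delta>) (s1 + inverse s1) (- (s3 / \<delta> + \<delta> / s3))"
    using product nonzero unfolding s
    by (intro rep_pointI[of a a b b c c d d]) (simp_all add: hecke_root_def field_simps)
  then show ?thesis
    by (simp add: t one_dim_rep_extending_iff_rep_point)
qed

definition extends_in_orbit :: "params \<Rightarrow> complex \<times> complex \<times> complex \<Rightarrow> bool" where
  "extends_in_orbit t chi \<longleftrightarrow> (\<exists>w\<in>weylD4. \<exists>t'. nonzero_params t' \<and> theta t' = weyl_act w (theta t) \<and>
      one_dim_rep_extending t' chi)"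

lemma extends_in_orbit_of_weyl:
  assumes "w \<in> weylD4" "weyl_act w (theta t) = (s1, s2, s3, s4, \<delta>)"
    and "s1 \<noteq> 0" "s2 \<noteq> 0" "s3 \<noteq> 0" "s4 \<noteq> 0" "s1 * s2 * s3 * s4 = \<delta>\<^sup>2" "s1 * s4 = 1"
  shows "extends_in_orbit t (\<delta> + inverse \<delta>, s1 + inverse s1, - (s3 / \<delta> + \<delta> / s3))"
proof -
  obtain t' where "nonzero_params t'" "theta t' = (s1, s2, s3, s4, \<delta>)"
    using theta_surj assms(3-7) by blast
  then show ?thesis
    using assms(1,2,8) one_dim_rep_of_theta unfolding extends_in_orbit_def by metis
qed

lemma extends_in_orbit_special_a:
  assumes nonzero: "a \<noteq> 0" "b \<noteq> 0" "c \<noteq> 0" "d \<noteq> 0" and "a\<^sup>2 = -1"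
  shows "extends_in_orbit (a, b, c, d) (a * bar c, a * bar b, a * bar d)"
proof -
  have "(a * bar c, a * bar b, a * bar d) =
      (a * c + inverse (a * c), a * b + inverse (a * b), - (- c / d / (a * c) + a * c / (- c / d)))"
    using nonzero \<open>a\<^sup>2 = -1\<close> unfolding bar_def by (simp add: field_simps power2_eq_square; algebra)
  also have "extends_in_orbit (a, b, c, d) \<dots>"
    using nonzero \<open>a\<^sup>2 = -1\<close>
    by (intro extends_in_orbit_of_weyl[of "(Transposition.transpose 1 3, {})" _
          "a * b" "c * d" "- c / d" "- a / b" "a * c"])
      (simp_all add: weylD4_def weyl_act_def Let_def scomp_def theta_def transpose_def field_simps
        power2_eq_square)
  finally show ?thesis .
qed

lemma extends_in_orbit_special_b:
  assumes nonzero: "a \<noteq> 0" "b \<noteq> 0" "c \<noteq> 0" "d \<noteq> 0" and "b\<^sup>2 = -1"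
  shows "extends_in_orbit (a, b, c, d) (b * bar d, b * bar a, b * bar c)"
proof -
  have "(b * bar d, b * bar a, b * bar c) =
      (b * d + inverse (b * d), a * b + inverse (a * b), - (- d / c / (b * d) + b * d / (- d / c)))"
    using nonzero \<open>b\<^sup>2 = -1\<close> unfolding bar_def by (simp add: field_simps power2_eq_square; algebra)
  also have "extends_in_orbit (a, b, c, d) \<dots>"
    using nonzero \<open>b\<^sup>2 = -1\<close>
    by (intro extends_in_orbit_of_weyl[of "(Transposition.transpose 1 3, {2, 3})" _
          "a * b" "c * d" "- d / c" "- b / a" "b * d"])
      (simp_all add: weylD4_def weyl_act_def Let_def scomp_def theta_def transpose_def field_simps
        power2_eq_square)
  finally show ?thesis .
qed

lemma extends_in_orbit_special_c:
  assumes nonzero: "a \<noteq> 0" "b \<noteq> 0" "c \<noteq> 0" "d \<noteq> 0" and "c\<^sup>2 = -1"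
  shows "extends_in_orbit (a, b, c, d) (c * bar a, c * bar d, c * bar b)"
proof -
  have "(c * bar a, c * bar d, c * bar b) =
      (a * c + inverse (a * c), - c / d + inverse (- c / d), - (a * b / (a * c) + a * c / (a * b)))"
    using nonzero \<open>c\<^sup>2 = -1\<close> unfolding bar_def by (simp add: field_simps power2_eq_square; algebra)
  also have "extends_in_orbit (a, b, c, d) \<dots>"
    using nonzero \<open>c\<^sup>2 = -1\<close>
    by (intro extends_in_orbit_of_weyl[of "(Transposition.transpose 0 2, {})" _
          "- c / d" "- a / b" "a * b" "c * d" "a * c"])
      (simp_all add: weylD4_def weyl_act_def Let_def scomp_def theta_def transpose_def field_simps
        power2_eq_square)
  finally show ?thesis .
qed

lemma extends_in_orbit_special_d:
  assumes nonzero: "a \<noteq> 0" "b \<noteq> 0" "c \<noteq> 0" "d \<noteq> 0" and "d\<^sup>2 = -1"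
  shows "extends_in_orbit (a, b, c, d) (d * bar b, d * bar c, d * bar a)"
proof -
  have "(d * bar b, d * bar c, d * bar a) =
      (- d / b + inverse (- d / b), - d / c + inverse (- d / c),
       - (inverse (a * b) / (- d / b) + - d / b / (inverse (a * b))))"
    using nonzero \<open>d\<^sup>2 = -1\<close> unfolding bar_def by (simp add: field_simps power2_eq_square; algebra)
  also have "extends_in_orbit (a, b, c, d) \<dots>"
    using nonzero \<open>d\<^sup>2 = -1\<close>
    by (intro extends_in_orbit_of_weyl[of "(Transposition.transpose 0 2, {0, 2})" _
          "- d / c" "- a / b" "inverse (a * b)" "c * d" "- d / b"])
      (simp_all add: weylD4_def weyl_act_def Let_def scomp_def theta_def transpose_def field_simps
        power2_eq_square)
  finally show ?thesis .
qed

lemma special_point_extends_in_orbit: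
  assumes nonzero: "a \<noteq> 0" "b \<noteq> 0" "c \<noteq> 0" "d \<noteq> 0" and "special_point a b c d X Y Z"
  shows "extends_in_orbit (a, b, c, d) (X, Y, Z)"
  using assms(5) extends_in_orbit_special_a[OF nonzero] extends_in_orbit_special_b[OF nonzero]
    extends_in_orbit_special_c[OF nonzero] extends_in_orbit_special_d[OF nonzero]
  unfolding special_point_def by auto

lemma rep_point_extends_in_orbit:
  assumes "nonzero_params (a, b, c, d)" "rep_point a b c d X Y Z"
  shows "extends_in_orbit (a, b, c, d) (X, Y, Z)"
proof -
  have "(id, {}) \<in> weylD4"
    by (simp add: weylD4_def)
  moreover have "weyl_act (id, {}) (theta (a, b, c, d)) = theta (a, b, c, d)"
    by (simp add: weyl_act_def Let_def scomp_def theta_def)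
  ultimately show ?thesis
    using assms unfolding extends_in_orbit_def by (metis one_dim_rep_extending_iff_rep_point)
qed

lemma singular_point_of_one_dim_rep: "one_dim_rep_extending t chi \<Longrightarrow> singular_point t chi"
  using rep_point_bar_singular
  by (cases t, cases chi)
    (simp add: one_dim_rep_extending_iff_rep_point singular_point_iff_bar_singular)

lemma singular_point_of_extends_in_orbit:
  assumes "nonzero_params t" "extends_in_orbit t chi"
  shows "singular_point t chi"
proof -
  obtain w t' where "w \<in> weylD4" "nonzero_params t'" "theta t' = weyl_act w (theta t)"
    and "one_dim_rep_extending t' chi"
    using assms(2) unfolding extends_in_orbit_def by blast
  then have "Rpoly t' = Rpoly t" "singular_point t' chi"
    using Rpoly_eq_of_weyl assms(1) singular_point_of_one_dim_rep by blast+
  then show ?thesis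
    unfolding singular_point_def by simp
qed

theorem proposition3p5:
  fixes t :: params and chi :: "complex \<times> complex \<times> complex"
  assumes "nonzero_params t"
    and "case chi of (c1, c2, c3) \<Rightarrow> Rpoly t c1 c2 c3 = 0"
  shows "singular_point t chi \<longleftrightarrow>
    (\<exists>w\<in>weylD4. \<exists>t'. nonzero_params t' \<and> theta t' = weyl_act w (theta t) \<and>
        one_dim_rep_extending t' chi)"
proof -
  obtain k0 k1 u0 u1 where t: "t = (k0, k1, u0, u1)"
    by (cases t) auto
  obtain X Y Z where chi: "chi = (X, Y, Z)"
    by (cases chi) auto
  have nonzero: "k0 \<noteq> 0" "k1 \<noteq> 0" "u0 \<noteq> 0" "u1 \<noteq> 0"
    using assms(1) by (simp_all add: t nonzero_params_def)
  have "singular_point t chi \<longleftrightarrow> extends_in_orbit t chi"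
  proof
    assume "singular_point t chi"
    then have "rep_or_special k0 k1 u0 u1 X Y Z"
      using bar_singular_imp_rep_or_special[OF nonzero]
      by (simp add: t chi singular_point_iff_bar_singular)
    then show "extends_in_orbit t chi"
      using rep_point_extends_in_orbit special_point_extends_in_orbit[OF nonzero] assms(1)
      unfolding rep_or_special_def t chi by blast
  qed (rule singular_point_of_extends_in_orbit[OF assms(1)])
  then show ?thesis
    unfolding extends_in_orbit_def .
qed

end
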